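(* Let $k=\mathbb{F}_3$ and let $M$ be a $7\times 7$ matrix over $k$ that is self-adjoint for the bilinear form $\langle x,y\rangle=x_1y_7+x_2y_6+\dots+x_7y_1$ on $k^7$ and regular semisimple (i.e. has $7$ distinct eigenvalues in an algebraic closure of $k$). Then $M$ is not properly blockwise triangular: there is no $m\in\{1,\dots,6\}$ such that $M_{ij}=0$ for all $i>m$ and $j\le m$.
   Context: $M_{ij}$ denotes the entry in row $i$ and column $j$. Self-adjointness for this form means $M_{ij}=M_{8-j,8-i}$ for all $i,j$. *)

theory Defs
  imports "Berlekamp_Zassenhaus.Finite_Field" "Jordan_Normal_Form.Jordan_Normal_Form"
    "HOL-Algebra.Algebraic_Closure_Type"
begin

text \<open>The prime field F_3 is modelled as 'a mod_ring with 'a of class prime_card and CARD('a) = 3.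
  Matrices are Jordan_Normal_Form matrices, with 0-based indices: the paper's entry M_ij is M $$ (i-1, j-1).
  The algebraic closure of a field 'b is the type 'b alg_closure with embedding to_ac.\<close>

end

theory Submission
  imports Defs
begin

(* Self-adjointness for the form x_1 y_n + ... + x_n y_1 means that M is persymmetric, i.e. equal
   to its reflection in the antidiagonal; that reflection is J M^T J for the exchange matrix J, so it
   has the same characteristic polynomial. If M has a zero lower-left block at m, reflecting gives
   one at n - m too, so for m <= n - m the matrix is block upper triangular with diagonal blocks
   A, C, D of sizes m, n - 2m, m, where D is the reflection of A. Hence chi_M = chi_A^2 chi_C has at
   most n - m < n distinct roots. Nothing specific to F_3 is used. *)

definition antitranspose_mat :: "'a mat \<Rightarrow> 'a mat" where
  "antitranspose_mat A =
     mat (dim_col A) (dim_row A) (\<lambda>(i, j). A $$ (dim_row A - 1 - j, dim_col A - 1 - i))"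

definition persymmetric :: "'a mat \<Rightarrow> bool" where
  "persymmetric A \<longleftrightarrow> antitranspose_mat A = A"

definition exchange_mat :: "nat \<Rightarrow> 'a :: {zero, one} mat" where
  "exchange_mat n = mat n n (\<lambda>(i, j). if i + j = n - 1 then 1 else 0)"

lemma exchange_mat_carrier [simp]: "exchange_mat n \<in> carrier_mat n n"
  and dim_row_exchange_mat [simp]: "dim_row (exchange_mat n) = n"
  and dim_col_exchange_mat [simp]: "dim_col (exchange_mat n) = n"
  by (simp_all add: exchange_mat_def)

lemma exchange_mat_mult:
  fixes B :: "'a :: comm_ring_1 mat"
  assumes "B \<in> carrier_mat n nc"
  shows "exchange_mat n * B = mat n nc (\<lambda>(i, j). B $$ (n - 1 - i, j))"
proof (rule eq_matI)
  fix i j assume "i < dim_row (mat n nc (\<lambda>(i, j). B $$ (n - 1 - i, j)))"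
    "j < dim_col (mat n nc (\<lambda>(i, j). B $$ (n - 1 - i, j)))"
  then have ij: "i < n" "j < nc" by auto
  have "(exchange_mat n * B) $$ (i, j) =
      (\<Sum>k\<in>{0..<n}. (if i + k = n - 1 then 1 else 0) * B $$ (k, j))"
    using assms ij by (simp add: exchange_mat_def scalar_prod_def)
  also have "\<dots> = (\<Sum>k\<in>{0..<n}. if k = n - 1 - i then B $$ (k, j) else 0)"
    by (rule sum.cong) (use ij in auto)
  also have "\<dots> = B $$ (n - 1 - i, j)"
    using ij by (simp add: sum.delta')
  finally show "(exchange_mat n * B) $$ (i, j) = mat n nc (\<lambda>(i, j). B $$ (n - 1 - i, j)) $$ (i, j)"
    using ij by simp
qed (use assms in auto)

lemma mult_exchange_mat:
  fixes B :: "'a :: comm_ring_1 mat"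
  assumes "B \<in> carrier_mat nr n"
  shows "B * exchange_mat n = mat nr n (\<lambda>(i, j). B $$ (i, n - 1 - j))"
proof (rule eq_matI)
  fix i j assume "i < dim_row (mat nr n (\<lambda>(i, j). B $$ (i, n - 1 - j)))"
    "j < dim_col (mat nr n (\<lambda>(i, j). B $$ (i, n - 1 - j)))"
  then have ij: "i < nr" "j < n" by auto
  have "(B * exchange_mat n) $$ (i, j) =
      (\<Sum>k\<in>{0..<n}. B $$ (i, k) * (if k + j = n - 1 then 1 else 0))"
    using assms ij by (simp add: exchange_mat_def scalar_prod_def)
  also have "\<dots> = (\<Sum>k\<in>{0..<n}. if k = n - 1 - j then B $$ (i, k) else 0)"
    by (rule sum.cong) (use ij in auto)
  also have "\<dots> = B $$ (i, n - 1 - j)"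
    using ij by (simp add: sum.delta')
  finally show "(B * exchange_mat n) $$ (i, j) = mat nr n (\<lambda>(i, j). B $$ (i, n - 1 - j)) $$ (i, j)"
    using ij by simp
qed (use assms in auto)

lemma exchange_mat_involutive:
  "exchange_mat n * exchange_mat n = (1\<^sub>m n :: 'a :: comm_ring_1 mat)"
  unfolding exchange_mat_mult[OF exchange_mat_carrier]
  by (rule eq_matI) (auto simp: exchange_mat_def)

lemma antitranspose_mat_eq_exchange:
  fixes A :: "'a :: comm_ring_1 mat"
  assumes "A \<in> carrier_mat n n"
  shows "antitranspose_mat A = exchange_mat n * transpose_mat A * exchange_mat n"
proof -
  have "exchange_mat n * transpose_mat A = mat n n (\<lambda>(i, j). A $$ (j, n - 1 - i))"
    using assms by (auto simp: exchange_mat_mult intro!: eq_matI)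
  then show ?thesis
    using assms
    by (simp add: mult_exchange_mat[of _ n n]) (auto simp: antitranspose_mat_def intro!: eq_matI)
qed

lemma det_antitranspose_mat:
  fixes A :: "'a :: comm_ring_1 mat"
  assumes A: "A \<in> carrier_mat n n"
  shows "det (antitranspose_mat A) = det A"
proof -
  let ?J = "exchange_mat n :: 'a mat"
  have JA: "?J * transpose_mat A \<in> carrier_mat n n"
    using A by (metis exchange_mat_carrier mult_carrier_mat transpose_carrier_mat)
  have "det (antitranspose_mat A) = det ?J * det (transpose_mat A) * det ?J"
    using A JA by (simp add: antitranspose_mat_eq_exchange det_mult[of _ n])
  also have "\<dots> = det (?J * ?J) * det A"
    using A by (simp add: det_mult[of _ n] det_transpose)
  finally show ?thesis
    by (simp add: exchange_mat_involutive)
qed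

lemma char_poly_antitranspose_mat:
  fixes A :: "'a :: comm_ring_1 mat"
  assumes A: "A \<in> carrier_mat n n"
  shows "char_poly (antitranspose_mat A) = char_poly A"
proof -
  have "char_poly_matrix (antitranspose_mat A) = antitranspose_mat (char_poly_matrix A)"
    using A by (auto simp: char_poly_matrix_def antitranspose_mat_def intro!: eq_matI)
  then show ?thesis
    using A by (simp add: char_poly_def det_antitranspose_mat[of _ n])
qed

lemma char_poly_four_block_lower_left_zero:
  fixes A1 :: "'a :: idom mat"
  assumes A1: "A1 \<in> carrier_mat n n" and A2: "A2 \<in> carrier_mat n m"
    and A4: "A4 \<in> carrier_mat m m"
  shows "char_poly (four_block_mat A1 A2 (0\<^sub>m m n) A4) = char_poly A1 * char_poly A4"
proof -
  have "char_poly_matrix (four_block_mat A1 A2 (0\<^sub>m m n) A4) =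
      four_block_mat (char_poly_matrix A1) (map_mat (\<lambda>a. [:- a:]) A2) (0\<^sub>m m n) (char_poly_matrix A4)"
    using A1 A2 A4 by (auto simp: char_poly_matrix_def intro!: eq_matI)
  then show ?thesis
    using A1 A2 A4 by (simp add: char_poly_def det_four_block_mat_lower_left_zero[of _ n _ m])
qed

definition block_upper_triangular :: "nat \<Rightarrow> 'a :: zero mat \<Rightarrow> bool" where
  "block_upper_triangular m A \<longleftrightarrow>
     (\<forall>i < dim_row A. \<forall>j < dim_col A. m \<le> i \<and> j < m \<longrightarrow> A $$ (i, j) = 0)"

definition principal_block :: "nat \<Rightarrow> nat \<Rightarrow> 'a mat \<Rightarrow> 'a mat" where
  "principal_block a s A = mat s s (\<lambda>(i, j). A $$ (i + a, j + a))"

lemma char_poly_block_upper_triangular: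
  fixes A :: "'a :: idom mat"
  assumes A: "A \<in> carrier_mat n n" and "m \<le> n" and "block_upper_triangular m A"
  shows "char_poly A = char_poly (principal_block 0 m A) * char_poly (principal_block m (n - m) A)"
proof -
  have "A = four_block_mat (principal_block 0 m A) (mat m (n - m) (\<lambda>(i, j). A $$ (i, j + m)))
      (0\<^sub>m (n - m) m) (principal_block m (n - m) A)"
    using assms by (auto simp: block_upper_triangular_def principal_block_def intro!: eq_matI)
  also have "char_poly \<dots> = char_poly (principal_block 0 m A) * char_poly (principal_block m (n - m) A)"
    by (rule char_poly_four_block_lower_left_zero) (auto simp: principal_block_def)
  finally show ?thesis .
qed

lemma principal_block_principal_block:
  "b + s \<le> t \<Longrightarrow> principal_block b s (principal_block a t A) = principal_block (a + b) s A"
  by (auto simp: principal_block_def add_ac intro!: eq_matI)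

lemma block_upper_triangular_principal_block:
  assumes "A \<in> carrier_mat n n" and "a + s \<le> n" and "block_upper_triangular k A"
  shows "block_upper_triangular (k - a) (principal_block a s A)"
  unfolding block_upper_triangular_def
proof (intro allI impI)
  fix i j assume ij: "i < dim_row (principal_block a s A)" "j < dim_col (principal_block a s A)"
    "k - a \<le> i \<and> j < k - a"
  have "k \<le> i + a" "j + a < k" "i + a < n" "j + a < n"
    using assms(2) ij by (auto simp: principal_block_def)
  then have "A $$ (i + a, j + a) = 0"
    using assms(1,3) unfolding block_upper_triangular_def by auto
  then show "principal_block a s A $$ (i, j) = 0"
    using ij by (simp add: principal_block_def)
qed

lemma persymmetricD:
  assumes "persymmetric A" and "A \<in> carrier_mat n n" and "i < n" and "j < n"
  shows "A $$ (i, j) = A $$ (n - 1 - j, n - 1 - i)"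
proof -
  have "antitranspose_mat A $$ (i, j) = A $$ (i, j)"
    using assms(1) by (simp add: persymmetric_def)
  then show ?thesis
    using assms(2-) by (simp add: antitranspose_mat_def)
qed

lemma principal_block_persymmetric:
  assumes "persymmetric A" and "A \<in> carrier_mat n n" and "a + s \<le> n"
  shows "principal_block (n - a - s) s A = antitranspose_mat (principal_block a s A)"
proof (rule eq_matI)
  fix i j assume "i < dim_row (antitranspose_mat (principal_block a s A))"
    "j < dim_col (antitranspose_mat (principal_block a s A))"
  then have ij: "i < s" "j < s"
    by (auto simp: antitranspose_mat_def principal_block_def)
  have "A $$ (i + (n - a - s), j + (n - a - s)) = A $$ (s - 1 - j + a, s - 1 - i + a)"
    using persymmetricD[OF assms(1,2), of "i + (n - a - s)" "j + (n - a - s)"] assms(3) ij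
    by (simp add: algebra_simps)
  then show "principal_block (n - a - s) s A $$ (i, j) = antitranspose_mat (principal_block a s A) $$ (i, j)"
    using ij by (simp add: principal_block_def antitranspose_mat_def)
qed (auto simp: principal_block_def antitranspose_mat_def)

lemma block_upper_triangular_persymmetric_mirror:
  assumes "persymmetric A" and "A \<in> carrier_mat n n" and "block_upper_triangular m A"
  shows "block_upper_triangular (n - m) A"
  unfolding block_upper_triangular_def
proof (intro allI impI)
  fix i j assume ij: "i < dim_row A" "j < dim_col A" "n - m \<le> i \<and> j < n - m"
  have "A $$ (i, j) = A $$ (n - 1 - j, n - 1 - i)"
    using assms(1,2) ij by (intro persymmetricD) auto
  moreover have "m \<le> n - 1 - j" "n - 1 - i < m" "n - 1 - j < n"
    using assms(2) ij by auto
  ultimately show "A $$ (i, j) = 0"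
    using assms(2,3) unfolding block_upper_triangular_def by auto
qed

lemma char_poly_persymmetric_block_upper_triangular:
  fixes A :: "'a :: idom mat"
  assumes A: "A \<in> carrier_mat n n" and sym: "persymmetric A"
    and tri: "block_upper_triangular m A" and m: "2 * m \<le> n"
  shows "char_poly A =
    char_poly (principal_block 0 m A) ^ 2 * char_poly (principal_block m (n - 2 * m) A)"
proof -
  let ?B = "principal_block m (n - m) A"
  have B: "?B \<in> carrier_mat (n - m) (n - m)"
    by (simp add: principal_block_def)
  have "block_upper_triangular (n - m - m) ?B"
    using m by (intro block_upper_triangular_principal_block[OF A]
        block_upper_triangular_persymmetric_mirror[OF sym A tri]) auto
  then have "char_poly ?B =
      char_poly (principal_block 0 (n - 2 * m) ?B) * char_poly (principal_block (n - 2 * m) m ?B)"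
    using char_poly_block_upper_triangular[OF B, of "n - 2 * m"] m
    by (simp add: mult_2 diff_diff_add)
  also have "principal_block 0 (n - 2 * m) ?B = principal_block m (n - 2 * m) A"
    using m by (simp add: principal_block_principal_block)
  also have "principal_block (n - 2 * m) m ?B = principal_block (n - 0 - m) m A"
    using m by (simp add: principal_block_principal_block)
  also have "\<dots> = antitranspose_mat (principal_block 0 m A)"
    using m by (intro principal_block_persymmetric[OF sym A]) auto
  finally have "char_poly ?B =
      char_poly (principal_block m (n - 2 * m) A) * char_poly (principal_block 0 m A)"
    by (simp add: char_poly_antitranspose_mat[of _ m] principal_block_def)
  moreover have "char_poly A = char_poly (principal_block 0 m A) * char_poly ?B"
    using m by (intro char_poly_block_upper_triangular[OF A _ tri]) auto
  ultimately show ?thesis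
    by (simp add: power2_eq_square ac_simps)
qed

lemma card_eigenvalues_persymmetric_block_upper_triangular:
  fixes A :: "'a :: field mat"
  assumes A: "A \<in> carrier_mat n n" and sym: "persymmetric A"
    and tri: "block_upper_triangular m A" and "0 < m" and "m < n"
  shows "card {x. eigenvalue A x} < n"
proof -
  obtain k where k_tri: "block_upper_triangular k A" and "0 < k" and k: "2 * k \<le> n"
  proof (cases "2 * m \<le> n")
    case True
    then show ?thesis using that tri \<open>0 < m\<close> by blast
  next
    case False
    then show ?thesis
      using that[OF block_upper_triangular_persymmetric_mirror[OF sym A tri]] \<open>m < n\<close> by auto
  qed
  let ?p = "char_poly (principal_block 0 k A)"
  let ?q = "char_poly (principal_block k (n - 2 * k) A)"
  have deg: "Polynomial.degree ?p = k" "Polynomial.degree ?q = n - 2 * k"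
    by (simp_all add: degree_monic_char_poly principal_block_def)
  have "?p \<noteq> 0" "?q \<noteq> 0"
    using degree_monic_char_poly[of "principal_block 0 k A" k]
      degree_monic_char_poly[of "principal_block k (n - 2 * k) A" "n - 2 * k"]
    by (auto simp: principal_block_def)
  then have pq: "?p * ?q \<noteq> 0" by simp
  have "{x. eigenvalue A x} = {x. poly (?p * ?q) x = 0}"
    using char_poly_persymmetric_block_upper_triangular[OF A sym k_tri k]
    by (simp add: eigenvalue_root_char_poly[OF A] power2_eq_square)
  then have "card {x. eigenvalue A x} \<le> Polynomial.degree (?p * ?q)"
    using card_poly_roots_bound[OF pq] by simp
  also have "\<dots> = n - k"
    using pq deg k by (simp add: degree_mult_eq)
  finally show ?thesis
    using \<open>0 < k\<close> k by linarith
qed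

lemma persymmetric_map_mat:
  assumes "persymmetric A"
  shows "persymmetric (map_mat f A)"
proof -
  have "antitranspose_mat (map_mat f A) = map_mat f (antitranspose_mat A)"
    by (auto simp: antitranspose_mat_def intro!: eq_matI)
  then show ?thesis
    using assms by (simp add: persymmetric_def)
qed

lemma block_upper_triangular_map_mat:
  "f 0 = 0 \<Longrightarrow> block_upper_triangular m A \<Longrightarrow> block_upper_triangular m (map_mat f A)"
  by (simp add: block_upper_triangular_def)

theorem lemma2p5:
  fixes M :: "'a :: prime_card mod_ring mat"
  assumes card3: "CARD('a) = 3"
    and dim: "M \<in> carrier_mat 7 7"
    and selfadj: "\<forall>i\<in>{1..7}. \<forall>j\<in>{1..7}. M $$ (i - 1, j - 1) = M $$ ((8 - j) - 1, (8 - i) - 1)"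
    and rss: "card {x. eigenvalue (map_mat to_ac M) x} = 7"
  shows "\<not> (\<exists>m\<in>{1..6::nat}. \<forall>i\<in>{1..7}. \<forall>j\<in>{1..7}. i > m \<and> j \<le> m \<longrightarrow> M $$ (i - 1, j - 1) = 0)"
proof
  assume "\<exists>m\<in>{1..6::nat}. \<forall>i\<in>{1..7}. \<forall>j\<in>{1..7}. i > m \<and> j \<le> m \<longrightarrow> M $$ (i - 1, j - 1) = 0"
  then obtain m :: nat where m: "1 \<le> m" "m \<le> 6"
    and zero: "\<forall>i\<in>{1..7}. \<forall>j\<in>{1..7}. i > m \<and> j \<le> m \<longrightarrow> M $$ (i - 1, j - 1) = 0"
    by auto
  have "persymmetric M"
    unfolding persymmetric_def
  proof (rule eq_matI)
    fix i j assume "i < dim_row M" "j < dim_col M"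
    then show "antitranspose_mat M $$ (i, j) = M $$ (i, j)"
      using dim selfadj[rule_format, of "Suc i" "Suc j"] by (simp add: antitranspose_mat_def)
  qed (use dim in \<open>simp_all add: antitranspose_mat_def\<close>)
  moreover have "block_upper_triangular m M"
    unfolding block_upper_triangular_def
    using dim zero[rule_format, of "Suc i" "Suc j" for i j] by auto
  ultimately have "card {x. eigenvalue (map_mat to_ac M) x} < 7"
    using dim m
    by (intro card_eigenvalues_persymmetric_block_upper_triangular[of _ 7 m]
        persymmetric_map_mat block_upper_triangular_map_mat) auto
  with rss show False by simp
qed

end
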